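(* If a function $f$ is computable by a $T(n)$-time Turing machine, then there is a $(T(n),T(n))$-time TM-TLM that computes $f$, i.e. a TM-TLM with time complexity $O(T(n))$ and IO complexity $O(T(n))$.
   Context: A Turing machine with two-level memory (TM-TLM) with main memory size $M$ has three tapes: a main memory tape consisting of $M$ cells, an unbounded external memory tape, and an address tape for the external memory. It has a finite set of states, input alphabet $\Sigma$, tape alphabet $\Gamma\supseteq\Sigma$ containing a blank, an accepting state, and a transition function $\delta: Q\times\Gamma\to Q\times\Gamma\times\{L,S,R\}$ acting on the main memory tape. There are special read states and write states. On entering a read state the machine writes an address $addr$ on the address tape and the content of the main memory cell under the head is replaced by the content of external cell $addr$; on entering a write state it writes $addr$ and the content of external cell $addr$ is replaced by the content of the main memory cell under the head. Each such Read/Write is an IO operation taking unit time; afterwards the head may move L, R or stay. For input $x$, the time is the number of transitions other than Read/Write operations, and the IO time is the number of Read/Write operations. A $(T(n),IO(n))$-time TM-TLM has time complexity $O(T(n))$ and IO complexity $O(IO(n))$ (complexity $O(T(n))$ meaning the measure is $O(T(n))$ for almost all $n$ and all inputs of length $n$). *)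

theory Defs
  imports Main
begin

datatype move = L | S | R

fun mv :: "move \<Rightarrow> nat \<Rightarrow> nat" where
  "mv L h = h - 1"
| "mv S h = h"
| "mv R h = Suc h"

definition tape_holds :: "'g \<Rightarrow> ('a \<Rightarrow> 'g) \<Rightarrow> (nat \<Rightarrow> 'g) \<Rightarrow> 'a list \<Rightarrow> bool" where
  "tape_holds blank emb tp y \<longleftrightarrow>
     (\<forall>i<length y. tp i = emb (y ! i)) \<and> tp (length y) = blank"

definition input_tape :: "'g \<Rightarrow> ('a \<Rightarrow> 'g) \<Rightarrow> 'a list \<Rightarrow> nat \<Rightarrow> 'g" where
  "input_tape blank emb x = (\<lambda>i. if i < length x then emb (x ! i) else blank)"

record ('q, 'g, 'a) tm =
  tm_start :: 'q
  tm_final :: "'q set"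
  tm_blank :: 'g
  tm_emb   :: "'a \<Rightarrow> 'g"
  tm_delta :: "'q \<Rightarrow> 'g \<Rightarrow> 'q \<times> 'g \<times> move"

definition tm_wf :: "('q, 'g, 'a) tm \<Rightarrow> bool" where
  "tm_wf A \<longleftrightarrow> inj (tm_emb A) \<and> tm_blank A \<notin> range (tm_emb A)"

text \<open>Configuration: (state, tape, head position, number of steps so far).
  Final states are fixed points.\<close>
type_synonym ('q, 'g) tm_conf = "'q \<times> (nat \<Rightarrow> 'g) \<times> nat \<times> nat"

definition tm_step :: "('q, 'g, 'a) tm \<Rightarrow> ('q, 'g) tm_conf \<Rightarrow> ('q, 'g) tm_conf" where
  "tm_step A c = (case c of (q, tp, h, t) \<Rightarrow>
     if q \<in> tm_final A then (q, tp, h, t)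
     else (case tm_delta A q (tp h) of (q', a, d) \<Rightarrow> (q', tp(h := a), mv d h, Suc t)))"

definition tm_init :: "('q, 'g, 'a) tm \<Rightarrow> 'a list \<Rightarrow> ('q, 'g) tm_conf" where
  "tm_init A x = (tm_start A, input_tape (tm_blank A) (tm_emb A) x, 0, 0)"

definition tm_run :: "('q, 'g, 'a) tm \<Rightarrow> 'a list \<Rightarrow> nat \<Rightarrow> ('q, 'g) tm_conf" where
  "tm_run A x k = (tm_step A ^^ k) (tm_init A x)"

definition tm_halted :: "('q, 'g, 'a) tm \<Rightarrow> 'a list \<Rightarrow> nat \<Rightarrow> bool" where
  "tm_halted A x k \<longleftrightarrow> fst (tm_run A x k) \<in> tm_final A"

definition tm_computes :: "('q, 'g, 'a) tm \<Rightarrow> ('a list \<Rightarrow> 'a list) \<Rightarrow> bool" where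
  "tm_computes A f \<longleftrightarrow> (\<forall>x. \<exists>k. tm_halted A x k \<and>
      tape_holds (tm_blank A) (tm_emb A) (fst (snd (tm_run A x k))) (f x))"

definition tm_time :: "('q, 'g, 'a) tm \<Rightarrow> 'a list \<Rightarrow> nat" where
  "tm_time A x = snd (snd (snd (tm_run A x (LEAST k. tm_halted A x k))))"

definition bigO_measure :: "('a list \<Rightarrow> nat) \<Rightarrow> (nat \<Rightarrow> nat) \<Rightarrow> bool" where
  "bigO_measure m T \<longleftrightarrow> (\<exists>c N. \<forall>x. length x \<ge> N \<longrightarrow> m x \<le> c * T (length x))"

definition tm_computes_in_time :: "('q, 'g, 'a) tm \<Rightarrow> ('a list \<Rightarrow> 'a list) \<Rightarrow> (nat \<Rightarrow> nat) \<Rightarrow> bool" where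
  "tm_computes_in_time A f T \<longleftrightarrow> tm_wf A \<and> tm_computes A f \<and> bigO_measure (tm_time A) T"

datatype kind = Normal | Rd | Wr

text \<open>In a read/write state q the
  machine writes the new address addr' = addr + tl_off q on the address tape, performs the
  IO operation, and then goes to state fst (tl_next A q) moving the main-memory head by
  snd (tl_next A q).\<close>
record ('q, 'g, 'a) tlm =
  tl_M      :: nat
  tl_states :: "'q set"
  tl_alpha  :: "'g set"
  tl_start  :: 'q
  tl_final  :: "'q set"
  tl_blank  :: 'g
  tl_emb    :: "'a \<Rightarrow> 'g"
  tl_kind   :: "'q \<Rightarrow> kind"
  tl_delta  :: "'q \<Rightarrow> 'g \<Rightarrow> 'q \<times> 'g \<times> move"
  tl_off    :: "'q \<Rightarrow> int"
  tl_next   :: "'q \<Rightarrow> 'q \<times> move"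

definition tlm_wf :: "('q, 'g, 'a) tlm \<Rightarrow> bool" where
  "tlm_wf A \<longleftrightarrow> 1 \<le> tl_M A \<and> finite (tl_states A) \<and> finite (tl_alpha A)
     \<and> tl_start A \<in> tl_states A \<and> tl_final A \<subseteq> tl_states A
     \<and> tl_blank A \<in> tl_alpha A \<and> range (tl_emb A) \<subseteq> tl_alpha A
     \<and> inj (tl_emb A) \<and> tl_blank A \<notin> range (tl_emb A)
     \<and> (\<forall>q\<in>tl_states A. \<forall>a\<in>tl_alpha A. q \<notin> tl_final A \<longrightarrow> tl_kind A q = Normal \<longrightarrow>
           fst (tl_delta A q a) \<in> tl_states A \<and> fst (snd (tl_delta A q a)) \<in> tl_alpha A)
     \<and> (\<forall>q\<in>tl_states A. q \<notin> tl_final A \<longrightarrow> tl_kind A q \<noteq> Normal \<longrightarrow>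
           fst (tl_next A q) \<in> tl_states A)"

text \<open>Configuration: (state, main memory, main head, external memory, address,
  time (non-IO transitions), IO time).\<close>
type_synonym ('q, 'g) tlm_conf =
  "'q \<times> (nat \<Rightarrow> 'g) \<times> nat \<times> (nat \<Rightarrow> 'g) \<times> nat \<times> nat \<times> nat"

definition mvM :: "nat \<Rightarrow> move \<Rightarrow> nat \<Rightarrow> nat" where
  "mvM M d h = min (M - 1) (mv d h)"

definition tlm_step :: "('q, 'g, 'a) tlm \<Rightarrow> ('q, 'g) tlm_conf \<Rightarrow> ('q, 'g) tlm_conf" where
  "tlm_step A c = (case c of (q, mm, h, ext, addr, t, io) \<Rightarrow>
     if q \<in> tl_final A then c
     else (case tl_kind A q of
        Normal \<Rightarrow> (case tl_delta A q (mm h) of (q', a, d) \<Rightarrow>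
                     (q', mm(h := a), mvM (tl_M A) d h, ext, addr, Suc t, io))
      | Rd \<Rightarrow> (let a' = nat (int addr + tl_off A q) in
                 (case tl_next A q of (q', d) \<Rightarrow>
                   (q', mm(h := ext a'), mvM (tl_M A) d h, ext, a', t, Suc io)))
      | Wr \<Rightarrow> (let a' = nat (int addr + tl_off A q) in
                 (case tl_next A q of (q', d) \<Rightarrow>
                   (q', mm, mvM (tl_M A) d h, ext(a' := mm h), a', t, Suc io)))))"

definition tlm_init :: "('q, 'g, 'a) tlm \<Rightarrow> 'a list \<Rightarrow> ('q, 'g) tlm_conf" where
  "tlm_init A x = (tl_start A, (\<lambda>_. tl_blank A), 0,
                   input_tape (tl_blank A) (tl_emb A) x, 0, 0, 0)"

definition tlm_run :: "('q, 'g, 'a) tlm \<Rightarrow> 'a list \<Rightarrow> nat \<Rightarrow> ('q, 'g) tlm_conf" where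
  "tlm_run A x k = (tlm_step A ^^ k) (tlm_init A x)"

definition tlm_halted :: "('q, 'g, 'a) tlm \<Rightarrow> 'a list \<Rightarrow> nat \<Rightarrow> bool" where
  "tlm_halted A x k \<longleftrightarrow> fst (tlm_run A x k) \<in> tl_final A"

definition tlm_ext :: "('q, 'g) tlm_conf \<Rightarrow> nat \<Rightarrow> 'g" where
  "tlm_ext c = fst (snd (snd (snd c)))"

definition tlm_computes :: "('q, 'g, 'a) tlm \<Rightarrow> ('a list \<Rightarrow> 'a list) \<Rightarrow> bool" where
  "tlm_computes A f \<longleftrightarrow> (\<forall>x. \<exists>k. tlm_halted A x k \<and>
      tape_holds (tl_blank A) (tl_emb A) (tlm_ext (tlm_run A x k)) (f x))"

definition tlm_time :: "('q, 'g, 'a) tlm \<Rightarrow> 'a list \<Rightarrow> nat" where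
  "tlm_time A x = fst (snd (snd (snd (snd (snd (tlm_run A x (LEAST k. tlm_halted A x k)))))))"

definition tlm_io :: "('q, 'g, 'a) tlm \<Rightarrow> 'a list \<Rightarrow> nat" where
  "tlm_io A x = snd (snd (snd (snd (snd (snd (tlm_run A x (LEAST k. tlm_halted A x k)))))))"

definition tlm_computes_in :: "('q, 'g, 'a) tlm \<Rightarrow> ('a list \<Rightarrow> 'a list)
     \<Rightarrow> (nat \<Rightarrow> nat) \<Rightarrow> (nat \<Rightarrow> nat) \<Rightarrow> bool" where
  "tlm_computes_in A f T IO \<longleftrightarrow> tlm_wf A \<and> tlm_computes A f
     \<and> bigO_measure (tlm_time A) T \<and> bigO_measure (tlm_io A) IO"

end

theory Submission
  imports Defs "HOL-Library.Countable"
begin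

text \<open>A main memory of a single cell suffices: the external memory plays the role of the
  Turing tape and each step of the Turing machine is simulated by three steps of the TM-TLM,
  namely a read of the scanned tape cell into main memory, one ordinary transition applying
  the Turing machine's transition function to it, and a write back to the same external
  cell. Hence the simulator uses exactly one ordinary transition and two IO operations per
  simulated step, and it halts after exactly three times as many steps.\<close>

lemma funpow_tlm_step_final: "fst C \<in> tl_final B \<Longrightarrow> (tlm_step B ^^ n) C = C"
  by (induction n) (auto simp: tlm_step_def split: prod.splits)

lemma tape_holds_map:
  "tape_holds b e tp y \<Longrightarrow> tape_holds (g b) (g \<circ> e) (g \<circ> tp) y"
  by (simp add: tape_holds_def)

lemma tlm_run_add: "tlm_run B x (m + n) = (tlm_step B ^^ m) (tlm_run B x n)"
  by (simp add: tlm_run_def funpow_add)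

lemma bigO_measure_mult:
  assumes "bigO_measure m T"
  shows "bigO_measure (\<lambda>x. c * m x) T"
proof -
  from assms obtain c' N where "\<And>x. length x \<ge> N \<Longrightarrow> m x \<le> c' * T (length x)"
    by (auto simp: bigO_measure_def)
  then have "\<And>x. length x \<ge> N \<Longrightarrow> c * m x \<le> (c * c') * T (length x)"
    by (simp add: mult.assoc)
  then show ?thesis
    unfolding bigO_measure_def by blast
qed

lemma UNIV_move: "(UNIV :: move set) = {L, S, R}"
  using move.exhaust by auto

lemma UNIV_kind: "(UNIV :: kind set) = {Normal, Rd, Wr}"
  using kind.exhaust by auto

instance move :: finite
  by standard (simp add: UNIV_move)

instance kind :: finite
  by standard (simp add: UNIV_kind)

definition move_offset :: "move \<Rightarrow> int" where
  "move_offset d = (case d of L \<Rightarrow> -1 | S \<Rightarrow> 0 | R \<Rightarrow> 1)"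

lemma nat_add_move_offset: "nat (int h + move_offset d) = mv d h"
  by (cases d) (auto simp: move_offset_def)

text \<open>States of the simulator encode triples (k, q, d): k is the kind of the state (its phase
  in the simulation of one step), q the simulated state and d the pending head move. The
  address register holds the previous head position h, so the simulated head sits at
  mv d h; the read phase moves the address there.\<close>

definition tlm_of_tm :: "('q::finite, 'g::finite, 'a) tm \<Rightarrow> (nat, nat, 'a) tlm" where
  "tlm_of_tm A = \<lparr> tl_M = 1,
     tl_states = range (to_nat :: kind \<times> 'q \<times> move \<Rightarrow> nat),
     tl_alpha = range (to_nat :: 'g \<Rightarrow> nat),
     tl_start = to_nat (Rd, tm_start A, S),
     tl_final = (\<lambda>(q, d). to_nat (Rd, q, d :: move)) ` (tm_final A \<times> UNIV),
     tl_blank = to_nat (tm_blank A),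
     tl_emb = to_nat \<circ> tm_emb A,
     tl_kind = (\<lambda>n. fst (from_nat n :: kind \<times> 'q \<times> move)),
     tl_delta = (\<lambda>n a. case from_nat n :: kind \<times> 'q \<times> move of (_, q, _) \<Rightarrow>
        (case tm_delta A q (from_nat a) of (q', b, d) \<Rightarrow> (to_nat (Wr, q', d), to_nat b, S))),
     tl_off = (\<lambda>n. case from_nat n :: kind \<times> 'q \<times> move of (k, _, d) \<Rightarrow>
        if k = Rd then move_offset d else 0),
     tl_next = (\<lambda>n. case from_nat n :: kind \<times> 'q \<times> move of (k, q, d) \<Rightarrow>
        (to_nat (if k = Rd then Normal else Rd, q, d), S)) \<rparr>"

definition simulates :: "('q::finite, 'g::finite) tm_conf \<Rightarrow> (nat, nat) tlm_conf \<Rightarrow> bool" where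
  "simulates c C \<longleftrightarrow> (case c of (q, tp, h, t) \<Rightarrow> \<exists>d addr mm.
     C = (to_nat (Rd, q, d :: move), mm, 0, to_nat \<circ> tp, addr, t, 2 * t) \<and> mv d addr = h)"

context
  fixes A :: "('q::finite, 'g::finite, 'a) tm"
begin

lemma tlm_of_tm_simps [simp]:
  "tl_M (tlm_of_tm A) = 1"
  "tl_blank (tlm_of_tm A) = to_nat (tm_blank A)"
  "tl_emb (tlm_of_tm A) = to_nat \<circ> tm_emb A"
  "to_nat (k, q :: 'q, d :: move) \<in> tl_final (tlm_of_tm A) \<longleftrightarrow> k = Rd \<and> q \<in> tm_final A"
  "tl_kind (tlm_of_tm A) (to_nat (k, q, d)) = k"
  "tl_delta (tlm_of_tm A) (to_nat (k, q, d)) a =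
     (case tm_delta A q (from_nat a) of (q', b, d') \<Rightarrow> (to_nat (Wr, q', d'), to_nat b, S))"
  "tl_off (tlm_of_tm A) (to_nat (k, q, d)) = (if k = Rd then move_offset d else 0)"
  "tl_next (tlm_of_tm A) (to_nat (k, q, d)) = (to_nat (if k = Rd then Normal else Rd, q, d), S)"
  by (auto simp: tlm_of_tm_def)

lemma tlm_step_fetch:
  assumes "q \<notin> tm_final A"
  shows "tlm_step (tlm_of_tm A) (to_nat (Rd, q :: 'q, d :: move), mm, 0, ext, addr, t, io)
    = (to_nat (Normal, q, d), mm(0 := ext (mv d addr)), 0, ext, mv d addr, t, Suc io)"
  using assms
  by (simp add: tlm_step_def mvM_def nat_add_move_offset Let_def)

lemma tlm_step_apply:
  assumes "tm_delta A q (from_nat (mm 0)) = (q', b, d')"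
  shows "tlm_step (tlm_of_tm A) (to_nat (Normal, q :: 'q, d :: move), mm, 0, ext, addr, t, io)
    = (to_nat (Wr, q', d'), mm(0 := to_nat b), 0, ext, addr, Suc t, io)"
  using assms by (simp add: tlm_step_def mvM_def)

lemma tlm_step_store:
  "tlm_step (tlm_of_tm A) (to_nat (Wr, q :: 'q, d :: move), mm, 0, ext, addr, t, io)
    = (to_nat (Rd, q, d), mm, 0, ext(addr := mm 0), addr, t, Suc io)"
  by (simp add: tlm_step_def mvM_def)

lemma simulates_init: "simulates (tm_init A x) (tlm_init (tlm_of_tm A) x)"
proof -
  have "input_tape (to_nat (tm_blank A)) (to_nat \<circ> tm_emb A) x
      = to_nat \<circ> input_tape (tm_blank A) (tm_emb A) x"
    by (auto simp: input_tape_def)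
  then show ?thesis
    by (auto simp: simulates_def tm_init_def tlm_init_def tlm_of_tm_def)
qed

lemma simulates_final_iff:
  "simulates c C \<Longrightarrow> fst C \<in> tl_final (tlm_of_tm A) \<longleftrightarrow> fst c \<in> tm_final A"
  by (auto simp: simulates_def)

lemma simulates_tm_step:
  assumes sim: "simulates c C"
  shows "simulates (tm_step A c) ((tlm_step (tlm_of_tm A) ^^ 3) C)"
proof (cases "fst c \<in> tm_final A")
  case True
  then show ?thesis
    using sim funpow_tlm_step_final[of C "tlm_of_tm A" 3] simulates_final_iff[OF sim]
    by (auto simp: tm_step_def split: prod.splits)
next
  case False
  obtain q tp h t where c: "c = (q, tp, h, t)"
    by (cases c) auto
  with sim obtain d addr mm where
    C: "C = (to_nat (Rd, q, d :: move), mm, 0, to_nat \<circ> tp, addr, t, 2 * t)" and h: "mv d addr = h"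
    by (auto simp: simulates_def)
  obtain q' b d' where delta: "tm_delta A q (tp h) = (q', b, d')"
    by (cases "tm_delta A q (tp h)") auto
  have nonfinal: "q \<notin> tm_final A"
    using False c by simp
  have "(tlm_step (tlm_of_tm A) ^^ 3) C
      = (to_nat (Rd, q', d'), mm(0 := to_nat b), 0, to_nat \<circ> tp(h := b), h, Suc t, 2 * Suc t)"
    using nonfinal delta
    by (simp add: C h numeral_3_eq_3 tlm_step_fetch tlm_step_apply tlm_step_store fun_upd_comp)
  moreover have "tm_step A c = (q', tp(h := b), mv d' h, Suc t)"
    using nonfinal delta by (simp add: c tm_step_def)
  ultimately show ?thesis
    by (auto simp: simulates_def)
qed

lemma simulates_not_final_within_step:
  fixes c :: "('q, 'g) tm_conf"
  assumes sim: "simulates c C" and nonfinal: "fst c \<notin> tm_final A" and "r < 3"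
  shows "fst ((tlm_step (tlm_of_tm A) ^^ r) C) \<notin> tl_final (tlm_of_tm A)"
proof -
  obtain q tp h t where c: "c = (q, tp, h, t)"
    by (cases c) auto
  with sim obtain d addr mm where
    C: "C = (to_nat (Rd, q, d :: move), mm, 0, to_nat \<circ> tp, addr, t, 2 * t)" and h: "mv d addr = h"
    by (auto simp: simulates_def)
  obtain q' b d' where delta: "tm_delta A q (tp h) = (q', b, d')"
    by (cases "tm_delta A q (tp h)") auto
  have "r = 0 \<or> r = 1 \<or> r = 2"
    using \<open>r < 3\<close> by auto
  then show ?thesis
    using nonfinal delta by (auto simp: c C h numeral_2_eq_2 tlm_step_fetch tlm_step_apply)
qed

lemma simulates_run: "simulates (tm_run A x k) (tlm_run (tlm_of_tm A) x (3 * k))"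
proof (induction k)
  case 0
  show ?case
    using simulates_init by (simp add: tm_run_def tlm_run_def)
next
  case (Suc k)
  have "tlm_run (tlm_of_tm A) x (3 * Suc k) = (tlm_step (tlm_of_tm A) ^^ 3) (tlm_run (tlm_of_tm A) x (3 * k))"
    using tlm_run_add[of _ x 3 "3 * k"] by simp
  then show ?case
    using simulates_tm_step[OF Suc.IH] by (simp add: tm_run_def)
qed

lemma tlm_halted_tlm_of_tm_iff: "tlm_halted (tlm_of_tm A) x (3 * k) \<longleftrightarrow> tm_halted A x k"
  using simulates_final_iff[OF simulates_run] by (simp add: tlm_halted_def tm_halted_def)

lemma tlm_not_halted_tlm_of_tm:
  assumes "\<not> tm_halted A x (j div 3)"
  shows "\<not> tlm_halted (tlm_of_tm A) x j"
proof -
  have "tlm_run (tlm_of_tm A) x j = (tlm_step (tlm_of_tm A) ^^ (j mod 3)) (tlm_run (tlm_of_tm A) x (3 * (j div 3)))"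
    using tlm_run_add[of _ x "j mod 3" "3 * (j div 3)"] by simp
  then show ?thesis
    using assms simulates_not_final_within_step[OF simulates_run, of x "j div 3" "j mod 3"]
    by (simp add: tlm_halted_def tm_halted_def)
qed

lemma Least_tlm_halted_tlm_of_tm:
  assumes "\<exists>k. tm_halted A x k"
  shows "(LEAST j. tlm_halted (tlm_of_tm A) x j) = 3 * (LEAST k. tm_halted A x k)"
proof (rule Least_equality)
  show "tlm_halted (tlm_of_tm A) x (3 * (LEAST k. tm_halted A x k))"
    using LeastI_ex[OF assms] by (simp add: tlm_halted_tlm_of_tm_iff)
next
  fix j
  assume "tlm_halted (tlm_of_tm A) x j"
  then have "tm_halted A x (j div 3)"
    using tlm_not_halted_tlm_of_tm by blast
  then have "(LEAST k. tm_halted A x k) \<le> j div 3"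
    by (rule Least_le)
  then show "3 * (LEAST k. tm_halted A x k) \<le> j"
    by linarith
qed

lemma tlm_time_io_tlm_of_tm:
  assumes "\<exists>k. tm_halted A x k"
  shows "tlm_time (tlm_of_tm A) x = tm_time A x" and "tlm_io (tlm_of_tm A) x = 2 * tm_time A x"
  using simulates_run[of x "LEAST k. tm_halted A x k"]
  unfolding tlm_time_def tlm_io_def tm_time_def Least_tlm_halted_tlm_of_tm[OF assms]
  by (auto simp: simulates_def split: prod.splits)

lemma tlm_computes_tlm_of_tm:
  assumes "tm_computes A f"
  shows "tlm_computes (tlm_of_tm A) f"
  unfolding tlm_computes_def
proof
  fix x
  from assms obtain k where halted: "tm_halted A x k"
    and holds: "tape_holds (tm_blank A) (tm_emb A) (fst (snd (tm_run A x k))) (f x)"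
    by (auto simp: tm_computes_def)
  have "tlm_ext (tlm_run (tlm_of_tm A) x (3 * k)) = to_nat \<circ> fst (snd (tm_run A x k))"
    using simulates_run[of x k] by (auto simp: simulates_def tlm_ext_def split: prod.splits)
  with holds have "tape_holds (tl_blank (tlm_of_tm A)) (tl_emb (tlm_of_tm A))
      (tlm_ext (tlm_run (tlm_of_tm A) x (3 * k))) (f x)"
    by (simp add: tape_holds_map)
  with halted show "\<exists>k. tlm_halted (tlm_of_tm A) x k \<and> tape_holds (tl_blank (tlm_of_tm A))
      (tl_emb (tlm_of_tm A)) (tlm_ext (tlm_run (tlm_of_tm A) x k)) (f x)"
    using tlm_halted_tlm_of_tm_iff by blast
qed

lemma tlm_wf_tlm_of_tm:
  assumes "tm_wf A"
  shows "tlm_wf (tlm_of_tm A)"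
proof -
  have "inj (to_nat \<circ> tm_emb A)" and "to_nat (tm_blank A) \<notin> range (to_nat \<circ> tm_emb A)"
    using assms by (auto simp: tm_wf_def inj_def)
  moreover have "fst (tl_delta (tlm_of_tm A) n a) \<in> tl_states (tlm_of_tm A)"
    and "fst (snd (tl_delta (tlm_of_tm A) n a)) \<in> tl_alpha (tlm_of_tm A)"
    and "fst (tl_next (tlm_of_tm A) n) \<in> tl_states (tlm_of_tm A)" for n a
    by (auto simp: tlm_of_tm_def split: prod.split)
  ultimately show ?thesis
    by (simp add: tlm_wf_def) (auto simp: tlm_of_tm_def)
qed

end

theorem theorem1:
  fixes f :: "'a list \<Rightarrow> 'a list" and T :: "nat \<Rightarrow> nat"
    and A :: "('q::finite, 'g::finite, 'a) tm"
  assumes "tm_computes_in_time A f T"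
  shows "\<exists>B :: (nat, nat, 'a) tlm. tlm_computes_in B f T T"
proof -
  from assms have wf: "tm_wf A" and comp: "tm_computes A f" and time: "bigO_measure (tm_time A) T"
    by (auto simp: tm_computes_in_time_def)
  have halts: "\<exists>k. tm_halted A x k" for x
    using comp by (auto simp: tm_computes_def)
  have "tlm_time (tlm_of_tm A) = tm_time A" and "tlm_io (tlm_of_tm A) = (\<lambda>x. 2 * tm_time A x)"
    using tlm_time_io_tlm_of_tm[OF halts] by auto
  with time bigO_measure_mult[OF time] have
    "bigO_measure (tlm_time (tlm_of_tm A)) T" and "bigO_measure (tlm_io (tlm_of_tm A)) T"
    by simp_all
  with tlm_wf_tlm_of_tm[OF wf] tlm_computes_tlm_of_tm[OF comp] show ?thesis
    unfolding tlm_computes_in_def by blast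
qed

end
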